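(* Let $d\ge 1$, let $g_k\in\mathbb{R}^d$ be a fixed (true) gradient vector, let $H_k\in\mathbb{R}^{d\times d}$ be a fixed matrix (an inverse Hessian approximation, not necessarily symmetric or positive definite), and let $\beta_k\in\mathbb{R}$ be fixed. Let $\widehat{g}_k = g_k + v_k$, where $v_k$ is a random vector with $\mathbb{E}[v_k]=0$ and $\mathbb{E}[v_k v_k^{\top}] = \sigma_g^2 I_d$ for some $\sigma_g^2\ge 0$. Define $p_k = -H_k g_k$ and $\widehat{p}_k = -H_k\widehat{g}_k$. If $$\beta_k > \frac{p_k^{\top} g_k - \sigma_g^2\,\mathrm{Tr}(H_k)}{g_k^{\top} g_k + d\,\sigma_g^2},$$ then $$\mathbb{E}\big[(\widehat{p}_k - \beta_k\widehat{g}_k)^{\top}\widehat{g}_k\big] < 0 .$$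
   Context: This concerns stochastic quasi-Newton optimisation of a function with gradient $g_k$ at iterate $x_k$, where only noisy gradient measurements $\widehat{g}_k$ are available; the search direction is $\widehat{p}_k=-H_k\widehat{g}_k$ and it is modified to $\widehat{p}_k-\beta_k\widehat{g}_k$ to obtain a descent direction in expectation. The expectation is taken over the gradient noise $v_k$, with $H_k$, $g_k$, $\beta_k$ treated as deterministic. Additionally assume $g_k^{\top}g_k + d\sigma_g^2>0$ so the bound is well defined. *)

theory Defs
  imports "HOL-Analysis.Analysis" "HOL-Probability.Probability"
begin

end

theory Submission
  imports Defs
begin

(* The integrand is the quadratic form ghat . (A ghat) with A = - H - beta I. For a random
   vector ghat = g + v with E[v] = 0 and E[v_i v_j] = C_ij, such a form has expectation
   g . (A g) + tr (A C^T); for C = sigma^2 I this is p^T g - sigma^2 tr H - beta (g^T g + d sigma^2),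
   which is negative exactly when beta exceeds the stated threshold. *)

lemma inner_matrix_vector_mult_eq_double_sum:
  fixes A :: "real ^ 'n ^ 'n" and x :: "real ^ 'n"
  shows "x \<bullet> (A *v x) = (\<Sum>i\<in>UNIV. \<Sum>j\<in>UNIV. A $ i $ j * (x $ i * x $ j))"
  by (simp add: inner_vec_def matrix_vector_mult_def sum_distrib_left mult_ac)

lemma trace_transpose_mul_eq_double_sum:
  fixes A C :: "real ^ 'n ^ 'n"
  shows "trace (A ** transpose C) = (\<Sum>i\<in>UNIV. \<Sum>j\<in>UNIV. A $ i $ j * C $ i $ j)"
  by (simp add: trace_def matrix_matrix_mult_def transpose_def)

lemma trace_scaleR:
  fixes A :: "real ^ 'n ^ 'n"
  shows "trace (c *\<^sub>R A) = c * trace A"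
  by (simp add: trace_def sum_distrib_left)

lemma trace_uminus:
  fixes A :: "real ^ 'n ^ 'n"
  shows "trace (- A) = - trace A"
  by (simp add: trace_def sum_negf)

lemma uminus_matrix_vector_mult:
  fixes A :: "real ^ 'n ^ 'm"
  shows "(- A) *v x = - (A *v x)"
  by (simp add: vec_eq_iff matrix_vector_mult_def sum_negf)

lemma descent_integrand_eq_quadratic_form:
  fixes H :: "real ^ 'n ^ 'n" and x :: "real ^ 'n"
  shows "(- (H *v x) - \<beta> *\<^sub>R x) \<bullet> x = x \<bullet> ((- H - \<beta> *\<^sub>R mat 1) *v x)"
  by (simp add: matrix_vector_mult_diff_rdistrib uminus_matrix_vector_mult
      scaleR_matrix_vector_assoc[symmetric] inner_commute)

context prob_space
begin

lemma shifted_centered_product: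
  fixes m :: "'i \<Rightarrow> real" and v :: "'a \<Rightarrow> 'i \<Rightarrow> real"
  assumes "integrable M (\<lambda>\<omega>. v \<omega> i)" "integrable M (\<lambda>\<omega>. v \<omega> j)"
    and "integrable M (\<lambda>\<omega>. v \<omega> i * v \<omega> j)"
    and "expectation (\<lambda>\<omega>. v \<omega> i) = 0" "expectation (\<lambda>\<omega>. v \<omega> j) = 0"
  shows "integrable M (\<lambda>\<omega>. (m i + v \<omega> i) * (m j + v \<omega> j))"
    and "expectation (\<lambda>\<omega>. (m i + v \<omega> i) * (m j + v \<omega> j))
           = m i * m j + expectation (\<lambda>\<omega>. v \<omega> i * v \<omega> j)"
proof -
  have expand: "(\<lambda>\<omega>. (m i + v \<omega> i) * (m j + v \<omega> j))
      = (\<lambda>\<omega>. m i * m j + m i * v \<omega> j + m j * v \<omega> i + v \<omega> i * v \<omega> j)"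
    by (auto simp: algebra_simps)
  show "integrable M (\<lambda>\<omega>. (m i + v \<omega> i) * (m j + v \<omega> j))"
    unfolding expand using assms by simp
  show "expectation (\<lambda>\<omega>. (m i + v \<omega> i) * (m j + v \<omega> j))
           = m i * m j + expectation (\<lambda>\<omega>. v \<omega> i * v \<omega> j)"
    unfolding expand using assms by (simp add: prob_space)
qed

lemma expectation_quadratic_form:
  fixes g :: "real ^ 'n" and v :: "'a \<Rightarrow> real ^ 'n" and A C :: "real ^ 'n ^ 'n"
  assumes int1: "\<And>i. integrable M (\<lambda>\<omega>. v \<omega> $ i)"
    and mean: "\<And>i. expectation (\<lambda>\<omega>. v \<omega> $ i) = 0"
    and int2: "\<And>i j. integrable M (\<lambda>\<omega>. v \<omega> $ i * v \<omega> $ j)"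
    and cov: "\<And>i j. expectation (\<lambda>\<omega>. v \<omega> $ i * v \<omega> $ j) = C $ i $ j"
  shows "expectation (\<lambda>\<omega>. (g + v \<omega>) \<bullet> (A *v (g + v \<omega>)))
           = g \<bullet> (A *v g) + trace (A ** transpose C)"
proof -
  note moments = shifted_centered_product[where m = "\<lambda>i. g $ i" and v = "\<lambda>\<omega> i. v \<omega> $ i",
      OF int1 int1 int2 mean mean]
  have "expectation (\<lambda>\<omega>. (g + v \<omega>) \<bullet> (A *v (g + v \<omega>)))
      = (\<Sum>i\<in>UNIV. \<Sum>j\<in>UNIV. A $ i $ j * expectation (\<lambda>\<omega>. (g $ i + v \<omega> $ i) * (g $ j + v \<omega> $ j)))"
    using moments(1) by (simp add: inner_matrix_vector_mult_eq_double_sum)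
  also have "\<dots> = (\<Sum>i\<in>UNIV. \<Sum>j\<in>UNIV. A $ i $ j * (g $ i * g $ j) + A $ i $ j * C $ i $ j)"
    unfolding moments(2) cov by (simp add: distrib_left)
  also have "\<dots> = g \<bullet> (A *v g) + trace (A ** transpose C)"
    by (simp add: sum.distrib inner_matrix_vector_mult_eq_double_sum trace_transpose_mul_eq_double_sum)
  finally show ?thesis .
qed

lemma expectation_quadratic_form_isotropic:
  fixes g :: "real ^ 'n" and v :: "'a \<Rightarrow> real ^ 'n" and A :: "real ^ 'n ^ 'n"
  assumes "\<And>i. integrable M (\<lambda>\<omega>. v \<omega> $ i)"
    and "\<And>i. expectation (\<lambda>\<omega>. v \<omega> $ i) = 0"
    and "\<And>i j. integrable M (\<lambda>\<omega>. v \<omega> $ i * v \<omega> $ j)"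
    and "\<And>i j. expectation (\<lambda>\<omega>. v \<omega> $ i * v \<omega> $ j) = (if i = j then \<sigma> else 0)"
  shows "expectation (\<lambda>\<omega>. (g + v \<omega>) \<bullet> (A *v (g + v \<omega>)))
           = g \<bullet> (A *v g) + \<sigma> * trace A"
proof -
  have "expectation (\<lambda>\<omega>. (g + v \<omega>) \<bullet> (A *v (g + v \<omega>)))
      = g \<bullet> (A *v g) + trace (A ** transpose (\<sigma> *\<^sub>R mat 1))"
    by (rule expectation_quadratic_form) (use assms in \<open>simp_all add: mat_def\<close>)
  then show ?thesis
    by (simp add: transpose_scalar matrix_scalar_ac trace_scaleR)
qed

end

theorem mainTheorem1:
  fixes M :: "'s measure"
    and g :: "real ^ 'd"
    and H :: "real ^ 'd ^ 'd"
    and \<beta> :: real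
    and v :: "'s \<Rightarrow> real ^ 'd"
    and \<sigma>sq :: real
  assumes "prob_space M"
    and "v \<in> borel_measurable M"
    and "\<And>i. integrable M (\<lambda>\<omega>. v \<omega> $ i)"
    and "\<And>i. prob_space.expectation M (\<lambda>\<omega>. v \<omega> $ i) = 0"
    and "\<And>i j. integrable M (\<lambda>\<omega>. v \<omega> $ i * v \<omega> $ j)"
    and "\<And>i j. prob_space.expectation M (\<lambda>\<omega>. v \<omega> $ i * v \<omega> $ j)
                 = (if i = j then \<sigma>sq else 0)"
    and "\<sigma>sq \<ge> 0"
    and "g \<bullet> g + real CARD('d) * \<sigma>sq > 0"
    and "\<beta> > ((- (H *v g)) \<bullet> g - \<sigma>sq * trace H) / (g \<bullet> g + real CARD('d) * \<sigma>sq)"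
  shows "prob_space.expectation M
           (\<lambda>\<omega>. let ghat = g + v \<omega>; phat = - (H *v ghat) in (phat - \<beta> *\<^sub>R ghat) \<bullet> ghat) < 0"
proof -
  interpret prob_space M by fact
  define D where "D = g \<bullet> g + real CARD('d) * \<sigma>sq"
  have "expectation
           (\<lambda>\<omega>. let ghat = g + v \<omega>; phat = - (H *v ghat) in (phat - \<beta> *\<^sub>R ghat) \<bullet> ghat)
      = expectation (\<lambda>\<omega>. (g + v \<omega>) \<bullet> ((- H - \<beta> *\<^sub>R mat 1) *v (g + v \<omega>)))"
    by (simp add: Let_def descent_integrand_eq_quadratic_form)
  also have "\<dots> = g \<bullet> ((- H - \<beta> *\<^sub>R mat 1) *v g) + \<sigma>sq * trace (- H - \<beta> *\<^sub>R mat 1)"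
    using assms(3-6) by (rule expectation_quadratic_form_isotropic)
  also have "\<dots> = (- (H *v g)) \<bullet> g - \<sigma>sq * trace H - \<beta> * D"
    unfolding descent_integrand_eq_quadratic_form[symmetric] D_def
    by (simp add: trace_sub trace_uminus trace_scaleR trace_I inner_diff_left algebra_simps)
  also have "\<dots> < 0"
    using assms(8,9) unfolding D_def[symmetric] by (simp add: divide_less_eq mult.commute)
  finally show ?thesis .
qed

end
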